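(* Let $\mathbf{x}:M\to\mathbb{R}^4_1$ be a complete, algebraic stationary surface, and let $z$ be a local complex coordinate on (the oriented double cover of) $M$ centered at a good singular end $z=0$ with multiplicity $\widetilde d=1$ and index $\mathrm{ind}=m\ge 1$, whose flux vector is zero (i.e. $\mathbf{x}_z\,\mathrm{d}z$ has zero residue at $z=0$). Then the vector-valued meromorphic function $\mathbf{x}_z$ has a Laurent expansion around $z=0$ of the form $$\mathbf{x}_z=\Big(\sum_{k=1}^m\frac{\alpha_{k+2}}{z^{k+2}}\Big)\mathbf{v}_0+\frac{1}{z^2}\mathbf{v}_1+O(1),$$ where $\alpha_{k+2}\in\mathbb{C}$ with $\alpha_{m+2}\neq 0$, $\mathbf{v}_0\in\mathbb{R}^4_1$ is a nonzero lightlike vector, $\mathbf{v}_1\in\mathbb{C}^4_1$ is an isotropic vector, and $\mathbf{v}_0,\mathrm{Re}(\mathbf{v}_1),\mathrm{Im}(\mathbf{v}_1)$ span a degenerate $3$-dimensional subspace of $\mathbb{R}^4_1$.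
   Context: $\mathbb{R}^4_1$ is $\mathbb{R}^4$ with the Lorentz inner product $\langle \mathbf{x},\mathbf{x}\rangle=x_1^2+x_2^2+x_3^2-x_4^2$, extended complex-bilinearly to $\mathbb{C}^4_1=\mathbb{C}^4$; a vector $\mathbf{v}\in\mathbb{C}^4_1$ is isotropic if $\langle\mathbf{v},\mathbf{v}\rangle=0$, and a real vector is lightlike if it is nonzero with $\langle\mathbf{v},\mathbf{v}\rangle=0$. A stationary surface is a spacelike immersed surface with zero mean curvature; locally $\mathbf{x}=2\,\mathrm{Re}\int(\phi+\psi,\,-\mathrm{i}(\phi-\psi),\,1-\phi\psi,\,1+\phi\psi)\,\mathrm{d}h$ with meromorphic Gauss maps $\phi,\psi$ and holomorphic $1$-form $\mathrm{d}h$, so $\mathbf{x}_z\,\mathrm{d}z=(\phi+\psi,-\mathrm{i}(\phi-\psi),1-\phi\psi,1+\phi\psi)\,\mathrm{d}h$. Algebraic means $\mathbf{x}_z\,\mathrm{d}z$ extends meromorphically to a compact Riemann surface from which finitely many punctures (the ends) are removed. An end $p$ is singular if $\phi(p)=\overline{\psi(p)}$; if $\phi$ and $\psi$ take this common value (conjugated for $\psi$) with multiplicities $m'$ and $n'$ at $p$, the end is good when $m'\ne n'$, and its index is $\mathrm{ind}_p=m'$ if $m'<n'$ and $\mathrm{ind}_p=-n'$ if $m'>n'$ (for a regular end, $\mathrm{ind}_p=0$); $\mathrm{ind}^+_p=|\mathrm{ind}_p|$. The multiplicity of the end is $\widetilde d=d-\mathrm{ind}^+_p$, where $d+1$ is the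 order of the pole of $\mathbf{x}_z\,\mathrm{d}z$ at $p$. *)

theory Defs
  imports "HOL-Complex_Analysis.Complex_Analysis" "HOL-Library.Extended_Nat"
begin

definition lor :: "complex^4 \<Rightarrow> complex^4 \<Rightarrow> complex" where
  "lor x y = x$1*y$1 + x$2*y$2 + x$3*y$3 - x$4*y$4"

definition lor_r :: "real^4 \<Rightarrow> real^4 \<Rightarrow> real" where
  "lor_r x y = x$1*y$1 + x$2*y$2 + x$3*y$3 - x$4*y$4"

definition isotropic :: "complex^4 \<Rightarrow> bool" where
  "isotropic v \<longleftrightarrow> lor v v = 0"

definition lightlike :: "real^4 \<Rightarrow> bool" where
  "lightlike v \<longleftrightarrow> v \<noteq> 0 \<and> lor_r v v = 0"

definition cvec :: "real^4 \<Rightarrow> complex^4" where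
  "cvec v = (\<chi> i. complex_of_real (v$i))"

definition Re_vec :: "complex^4 \<Rightarrow> real^4" where
  "Re_vec v = (\<chi> i. Re (v$i))"

definition Im_vec :: "complex^4 \<Rightarrow> real^4" where
  "Im_vec v = (\<chi> i. Im (v$i))"

definition degenerate_subspace :: "(real^4) set \<Rightarrow> bool" where
  "degenerate_subspace W \<longleftrightarrow> (\<exists>w\<in>W. w \<noteq> 0 \<and> (\<forall>u\<in>W. lor_r w u = 0))"

text \<open>x_z determined by the Weierstrass data phi, psi and dh = h dz.\<close>
definition xz :: "(complex \<Rightarrow> complex) \<Rightarrow> (complex \<Rightarrow> complex) \<Rightarrow> (complex \<Rightarrow> complex)
                   \<Rightarrow> complex \<Rightarrow> complex^4" where
  "xz \<phi> \<psi> h z = (\<chi> i. h z * (if i = 1 then \<phi> z + \<psi> z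
                          else if i = 2 then - \<i> * (\<phi> z - \<psi> z)
                          else if i = 3 then 1 - \<phi> z * \<psi> z
                          else 1 + \<phi> z * \<psi> z))"

definition value_mult :: "(complex \<Rightarrow> complex) \<Rightarrow> complex \<Rightarrow> enat" where
  "value_mult f c = (if (\<forall>\<^sub>F z in at 0. f z = c) then \<infinity>
                     else enat (nat (zorder (\<lambda>z. f z - c) 0)))"

definition pole_mult :: "(complex \<Rightarrow> complex) \<Rightarrow> enat" where
  "pole_mult f = enat (nat (- zorder f 0))"

text \<open>The end z = 0 is singular (phi(0) = conj(psi(0)) in the extended complex plane), and
  m', n' are the multiplicities with which phi, psi take this common value
  (conjugated for psi).\<close>
definition singular_end_mults :: "(complex \<Rightarrow> complex) \<Rightarrow> (complex \<Rightarrow> complex) \<Rightarrow> enat \<Rightarrow> enat \<Rightarrow> bool" where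
  "singular_end_mults \<phi> \<psi> m' n' \<longleftrightarrow>
     (is_pole \<phi> 0 \<and> is_pole \<psi> 0 \<and> m' = pole_mult \<phi> \<and> n' = pole_mult \<psi>) \<or>
     (\<exists>c. (\<phi> \<longlongrightarrow> c) (at 0) \<and> (\<psi> \<longlongrightarrow> cnj c) (at 0) \<and>
          m' = value_mult \<phi> c \<and> n' = value_mult \<psi> (cnj c))"

definition end_index :: "enat \<Rightarrow> enat \<Rightarrow> int" where
  "end_index m' n' = (if m' < n' then int (the_enat m') else - int (the_enat n'))"

definition vpole_order :: "(complex \<Rightarrow> complex^4) \<Rightarrow> nat \<Rightarrow> bool" where
  "vpole_order F n \<longleftrightarrow> (\<exists>L. L \<noteq> 0 \<and> ((\<lambda>z. (z ^ n) *s F z) \<longlongrightarrow> L) (at 0))"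

end

theory Submission
  imports Defs
begin

text \<open>
  Near the end either \<open>\<phi>\<close> and \<open>\<psi>\<close> both have poles, or \<open>\<phi>(0) = c\<close> and \<open>\<psi>(0) = cnj c\<close> are finite.
  In the finite case \<open>x\<^sub>z = h (v\<^sub>0 + f u + g cnj u + f g e)\<close> with \<open>f = \<phi> - c\<close> and \<open>g = \<psi> - cnj c\<close>, where
  \<open>v\<^sub>0\<close> is the real lightlike vector belonging to \<open>c\<close> and \<open>u\<close> is an isotropic vector orthogonal to
  \<open>v\<^sub>0\<close> such that \<open>v\<^sub>0, u, cnj u\<close> are linearly independent; in the other case the same holds with
  \<open>h \<phi> \<psi>, 1/\<phi>, 1/\<psi>\<close> in place of \<open>h, f, g\<close>. Index \<open>m\<close> means that \<open>f\<close> vanishes to order exactly \<open>m\<close>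
  and \<open>g\<close> to order at least \<open>m + 1\<close>, and multiplicity one means that \<open>x\<^sub>z\<close> has a pole of order
  \<open>m + 2\<close>. Hence the scalar factor has a pole of order exactly \<open>m + 2\<close>, and the coefficients of
  \<open>u, cnj u, e\<close> have poles of order at most \<open>2, 1, 0\<close>. The residue of \<open>x\<^sub>z\<close> is therefore a
  combination of \<open>v\<^sub>0, u, cnj u\<close>, and zero flux kills all three coefficients. What is left is the
  stated expansion with \<open>v\<^sub>1 = a v\<^sub>0 + \<beta> u\<close>, \<open>\<beta> \<noteq> 0\<close>: such a \<open>v\<^sub>1\<close> is isotropic, and \<open>v\<^sub>0\<close> is null and
  orthogonal to the independent vectors \<open>v\<^sub>0, Re v\<^sub>1, Im v\<^sub>1\<close>, which thus span a degenerate 3-space.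
\<close>

section \<open>The Lorentz space\<close>

definition vec4 :: "'a \<Rightarrow> 'a \<Rightarrow> 'a \<Rightarrow> 'a \<Rightarrow> 'a^4" where
  "vec4 a b c d = (\<chi> i. if i = 1 then a else if i = 2 then b else if i = 3 then c else d)"

lemma vec4_nth [simp]:
  "vec4 a b c d $ 1 = a" "vec4 a b c d $ 2 = b" "vec4 a b c d $ 3 = c" "vec4 a b c d $ 4 = d"
  by (simp_all add: vec4_def)

lemma vec4_eq_iff: "x = vec4 a b c d \<longleftrightarrow> x $ 1 = a \<and> x $ 2 = b \<and> x $ 3 = c \<and> x $ 4 = d"
  by (auto simp: vec_eq_iff forall_4)

lemma vec4_eq_0_iff [simp]: "vec4 a b c d = 0 \<longleftrightarrow> a = 0 \<and> b = 0 \<and> c = 0 \<and> d = 0"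
  by (auto simp: vec_eq_iff forall_4)

lemma vec4_add [simp]: "vec4 a b c d + vec4 a' b' c' d' = vec4 (a + a') (b + b') (c + c') (d + d')"
  by (simp add: vec4_eq_iff)

lemma scaleC_vec4 [simp]: "k *s vec4 a b c d = vec4 (k * a) (k * b) (k * c) (k * d)"
  by (simp add: vec4_eq_iff)

definition cnj_vec :: "complex^4 \<Rightarrow> complex^4" where
  "cnj_vec w = (\<chi> i. cnj (w $ i))"

definition independent3_complex :: "complex^4 \<Rightarrow> complex^4 \<Rightarrow> complex^4 \<Rightarrow> bool" where
  "independent3_complex x y z \<longleftrightarrow>
     (\<forall>a b c. a *s x + b *s y + c *s z = 0 \<longrightarrow> a = 0 \<and> b = 0 \<and> c = 0)"

lemma cvec_vec4 [simp]: "cvec (vec4 a b c d) = vec4 (of_real a) (of_real b) (of_real c) (of_real d)"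
  by (simp add: vec4_eq_iff cvec_def)

lemma cnj_vec_vec4 [simp]: "cnj_vec (vec4 a b c d) = vec4 (cnj a) (cnj b) (cnj c) (cnj d)"
  by (simp add: vec4_eq_iff cnj_vec_def)

lemma lor_vec4 [simp]: "lor (vec4 a b c d) (vec4 a' b' c' d') = a * a' + b * b' + c * c' - d * d'"
  by (simp add: lor_def)

lemma lor_r_vec4 [simp]: "lor_r (vec4 a b c d) (vec4 a' b' c' d') = a * a' + b * b' + c * c' - d * d'"
  by (simp add: lor_r_def)

lemma lor_cvec: "lor (cvec u) (cvec v) = complex_of_real (lor_r u v)"
  by (simp add: lor_def lor_r_def cvec_def)

lemma lor_r_Re_vec: "lor_r v (Re_vec w) = Re (lor (cvec v) w)"
  by (simp add: lor_def lor_r_def cvec_def Re_vec_def)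

lemma lor_r_Im_vec: "lor_r v (Im_vec w) = Im (lor (cvec v) w)"
  by (simp add: lor_def lor_r_def cvec_def Im_vec_def)

lemma lor_r_add_right: "lor_r x (u + v) = lor_r x u + lor_r x v"
  by (simp add: lor_r_def algebra_simps)

lemma lor_r_scaleR_right: "lor_r x (c *\<^sub>R u) = c * lor_r x u"
  by (simp add: lor_r_def algebra_simps)

lemma lor_scaleC_add_right: "lor x (a *s y + b *s z) = a * lor x y + b * lor x z"
  by (simp add: lor_def algebra_simps)

lemma lor_scaleC_add_self:
  "lor (a *s x + b *s y) (a *s x + b *s y) = a\<^sup>2 * lor x x + 2 * a * b * lor x y + b\<^sup>2 * lor y y"
  by (simp add: lor_def algebra_simps power2_eq_square)

lemma real_independent_if_independent3_complex:
  assumes "independent3_complex (cvec v) w (cnj_vec w)"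
  shows "\<forall>l m n. l *\<^sub>R v + m *\<^sub>R Re_vec w + n *\<^sub>R Im_vec w = 0 \<longrightarrow> l = 0 \<and> m = 0 \<and> n = 0"
proof (intro allI impI)
  fix l m n :: real
  assume "l *\<^sub>R v + m *\<^sub>R Re_vec w + n *\<^sub>R Im_vec w = 0"
  then have comp: "l * v $ i + m * Re (w $ i) + n * Im (w $ i) = 0" for i
    by (simp add: vec_eq_iff Re_vec_def Im_vec_def)
  \<comment> \<open>\<open>m Re w + n Im w\<close> is the real number \<open>((m - i n) w + (m + i n) cnj w) / 2\<close>\<close>
  have "of_real l *s cvec v + ((m - \<i> * n) / 2) *s w + ((m + \<i> * n) / 2) *s cnj_vec w = 0"
    unfolding vec_eq_iff
  proof
    fix i
    show "(of_real l *s cvec v + ((m - \<i> * n) / 2) *s w + ((m + \<i> * n) / 2) *s cnj_vec w) $ i = 0 $ i"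
      using comp[of i] by (simp add: cvec_def cnj_vec_def complex_eq_iff field_simps)
  qed
  with assms have "complex_of_real l = 0" "(m - \<i> * n) / 2 = 0" "(m + \<i> * n) / 2 = 0"
    unfolding independent3_complex_def by blast+
  then show "l = 0 \<and> m = 0 \<and> n = 0"
    by (simp add: complex_eq_iff)
qed

lemma independent3_complex_shift:
  assumes indep: "independent3_complex (cvec v) w (cnj_vec w)" and "\<beta> \<noteq> 0"
  shows "independent3_complex (cvec v) (a *s cvec v + \<beta> *s w) (cnj_vec (a *s cvec v + \<beta> *s w))"
  unfolding independent3_complex_def
proof (intro allI impI)
  fix a' b' c'
  assume "a' *s cvec v + b' *s (a *s cvec v + \<beta> *s w) + c' *s cnj_vec (a *s cvec v + \<beta> *s w) = 0"
  then have "(a' + b' * a + c' * cnj a) *s cvec v + (b' * \<beta>) *s w + (c' * cnj \<beta>) *s cnj_vec w = 0"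
    by (simp add: vec_eq_iff cvec_def cnj_vec_def algebra_simps)
  with indep have "a' + b' * a + c' * cnj a = 0" "b' * \<beta> = 0" "c' * cnj \<beta> = 0"
    unfolding independent3_complex_def by blast+
  with \<open>\<beta> \<noteq> 0\<close> show "a' = 0 \<and> b' = 0 \<and> c' = 0"
    by auto
qed

lemma dim_span_three:
  fixes x y z :: "'a::real_vector"
  assumes "\<forall>a b c. a *\<^sub>R x + b *\<^sub>R y + c *\<^sub>R z = 0 \<longrightarrow> a = 0 \<and> b = 0 \<and> c = 0"
  shows "dim (span {x, y, z}) = 3"
proof -
  have "x \<noteq> y" "x \<noteq> z" "y \<noteq> z"
    using assms[rule_format, of 1 "-1" 0] assms[rule_format, of 1 0 "-1"]
      assms[rule_format, of 0 1 "-1"] by auto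
  moreover have "independent {x, y, z}"
  proof (rule independent_if_scalars_zero)
    fix f v assume "(\<Sum>v\<in>{x, y, z}. f v *\<^sub>R v) = 0" "v \<in> {x, y, z}"
    with \<open>x \<noteq> y\<close> \<open>x \<noteq> z\<close> \<open>y \<noteq> z\<close> assms show "f v = 0"
      by (auto simp: add.assoc)
  qed simp
  ultimately show ?thesis
    by (simp add: dim_eq_card_independent)
qed

lemma degenerate_subspace_span_null:
  fixes x y z :: "real^4"
  assumes "x \<noteq> 0" "lor_r x x = 0" "lor_r x y = 0" "lor_r x z = 0"
  shows "degenerate_subspace (span {x, y, z})"
proof -
  have "subspace {u. lor_r x u = 0}"
    by (simp add: subspace_def lor_r_add_right lor_r_scaleR_right) (simp add: lor_r_def)
  then have "\<forall>u\<in>span {x, y, z}. lor_r x u = 0"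
    using assms by (auto elim!: span_induct)
  then show ?thesis
    unfolding degenerate_subspace_def using assms(1) by (blast intro: span_base)
qed

definition null_frame :: "real^4 \<Rightarrow> complex^4 \<Rightarrow> bool" where
  "null_frame v w \<longleftrightarrow>
     independent3_complex (cvec v) w (cnj_vec w) \<and> lor_r v v = 0 \<and> isotropic w \<and> lor (cvec v) w = 0"

lemma null_frame_span:
  fixes v :: "real^4" and w :: "complex^4" and a \<beta> :: complex
  assumes "null_frame v w" and "\<beta> \<noteq> 0"
  defines "v1 \<equiv> a *s cvec v + \<beta> *s w"
  shows "lightlike v \<and> isotropic v1 \<and> dim (span {v, Re_vec v1, Im_vec v1}) = 3 \<and>
         degenerate_subspace (span {v, Re_vec v1, Im_vec v1})"
proof -
  have indep: "independent3_complex (cvec v) w (cnj_vec w)"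
    and null: "lor_r v v = 0" and iso: "isotropic w" and orth: "lor (cvec v) w = 0"
    using \<open>null_frame v w\<close> by (simp_all add: null_frame_def)
  have li: "\<forall>l m n. l *\<^sub>R v + m *\<^sub>R Re_vec v1 + n *\<^sub>R Im_vec v1 = 0 \<longrightarrow> l = 0 \<and> m = 0 \<and> n = 0"
    unfolding v1_def
    by (rule real_independent_if_independent3_complex[OF independent3_complex_shift[OF indep \<open>\<beta> \<noteq> 0\<close>]])
  have "v \<noteq> 0"
    using li[rule_format, of 1 0 0] by auto
  have "lor (cvec v) v1 = 0"
    by (simp add: v1_def lor_scaleC_add_right lor_cvec null orth)
  then have "lor_r v (Re_vec v1) = 0" "lor_r v (Im_vec v1) = 0"
    by (simp_all add: lor_r_Re_vec lor_r_Im_vec)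
  moreover have "isotropic v1"
    using iso by (simp add: v1_def isotropic_def lor_scaleC_add_self lor_cvec null orth)
  ultimately show ?thesis
    using \<open>v \<noteq> 0\<close> null dim_span_three[OF li] degenerate_subspace_span_null
    by (simp add: lightlike_def)
qed

section \<open>Null frames of the Weierstrass representation\<close>

text \<open>
  The Weierstrass vector \<open>(\<phi> + \<psi>, -\<i>(\<phi> - \<psi>), 1 - \<phi>\<psi>, 1 + \<phi>\<psi>)\<close> is affine in each of \<open>\<phi>, \<psi>\<close>;
  its Taylor coefficients at \<open>(c, cnj c)\<close> are \<open>null_vec c\<close>, \<open>null_tangent c\<close>,
  \<open>cnj_vec (null_tangent c)\<close> and \<open>(0, 0, -1, 1)\<close>. Divided by \<open>\<phi>\<psi>\<close> it is affine in each of
  \<open>1/\<phi>, 1/\<psi>\<close>, which gives the frame at \<open>c = \<infinity>\<close>.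
\<close>
definition null_vec :: "complex \<Rightarrow> real^4" where
  "null_vec c = vec4 (2 * Re c) (2 * Im c) (1 - ((Re c)\<^sup>2 + (Im c)\<^sup>2)) (1 + ((Re c)\<^sup>2 + (Im c)\<^sup>2))"

definition null_tangent :: "complex \<Rightarrow> complex^4" where
  "null_tangent c = vec4 1 (- \<i>) (- cnj c) (cnj c)"

definition null_vec_infinity :: "real^4" where
  "null_vec_infinity = vec4 0 0 (- 1) 1"

definition null_tangent_infinity :: "complex^4" where
  "null_tangent_infinity = vec4 1 \<i> 0 0"

lemma cvec_null_vec:
  "cvec (null_vec c) = vec4 (c + cnj c) (- \<i> * (c - cnj c)) (1 - c * cnj c) (1 + c * cnj c)"
  by (simp add: null_vec_def vec4_eq_iff complex_eq_iff power2_eq_square)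

lemma xz_value_frame:
  assumes "\<phi> z = c + f" "\<psi> z = cnj c + g"
  shows "xz \<phi> \<psi> h z = h z *s (cvec (null_vec c) + f *s null_tangent c + g *s cnj_vec (null_tangent c)
                                + (f * g) *s vec4 0 0 (- 1) 1)"
  by (simp add: vec4_eq_iff xz_def cvec_null_vec null_tangent_def assms algebra_simps)

lemma xz_pole_frame:
  assumes "\<phi> z \<noteq> 0" "\<psi> z \<noteq> 0"
  shows "xz \<phi> \<psi> h z = (h z * \<phi> z * \<psi> z) *s (cvec null_vec_infinity + (1 / \<phi> z) *s null_tangent_infinity
          + (1 / \<psi> z) *s cnj_vec null_tangent_infinity + (1 / \<phi> z * (1 / \<psi> z)) *s vec4 0 0 1 1)"
  using assms by (simp add: vec4_eq_iff xz_def null_vec_infinity_def null_tangent_infinity_def field_simps)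

lemma null_frame_value: "null_frame (null_vec c) (null_tangent c)"
  unfolding null_frame_def
proof (intro conjI)
  show "independent3_complex (cvec (null_vec c)) (null_tangent c) (cnj_vec (null_tangent c))"
    unfolding independent3_complex_def
  proof (intro allI impI)
    fix a b d
    assume "a *s cvec (null_vec c) + b *s null_tangent c + d *s cnj_vec (null_tangent c) = 0"
    then have e1: "a * (c + cnj c) + b + d = 0"
      and e2: "a * (- \<i> * (c - cnj c)) + b * (- \<i>) + d * \<i> = 0"
      and e3: "a * (1 - c * cnj c) + b * (- cnj c) + d * (- c) = 0"
      and e4: "a * (1 + c * cnj c) + b * cnj c + d * c = 0"
      by (simp_all add: cvec_null_vec null_tangent_def vec_eq_iff forall_4)
    have "2 * a = (a * (1 - c * cnj c) + b * (- cnj c) + d * (- c)) + (a * (1 + c * cnj c) + b * cnj c + d * c)"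
      by (simp add: algebra_simps)
    with e3 e4 have "a = 0"
      by simp
    moreover have "\<i> * (d - b) = 0"
      using e2 \<open>a = 0\<close> by (simp add: algebra_simps)
    ultimately show "a = 0 \<and> b = 0 \<and> d = 0"
      using e1 by simp
  qed
  show "lor_r (null_vec c) (null_vec c) = 0"
    by (simp add: null_vec_def algebra_simps power2_eq_square)
  show "isotropic (null_tangent c)"
    by (simp add: isotropic_def null_tangent_def)
  show "lor (cvec (null_vec c)) (null_tangent c) = 0"
    by (simp add: cvec_null_vec null_tangent_def algebra_simps)
qed

lemma null_frame_infinity: "null_frame null_vec_infinity null_tangent_infinity"
  by (auto simp: null_frame_def independent3_complex_def null_vec_infinity_def null_tangent_infinity_def
      isotropic_def algebra_simps)

section \<open>Principal parts and residues\<close>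

lemma holomorphic_on_ball_tendsto_center:
  assumes "f holomorphic_on ball 0 r" "r > 0"
  shows "(f \<longlongrightarrow> f 0) (at 0)"
  using assms holomorphic_on_imp_continuous_on[OF assms(1)]
  by (simp add: continuous_on_eq_continuous_at isCont_def)

lemma tendsto_imp_eventually_norm_le:
  assumes "(f \<longlongrightarrow> L) F"
  shows "\<exists>B. \<forall>\<^sub>F x in F. norm (f x) \<le> B"
proof -
  have "\<forall>\<^sub>F x in F. norm (f x) < norm L + 1"
    using order_tendstoD(2)[OF tendsto_norm[OF assms]] by simp
  then show ?thesis
    by (auto intro!: exI[of _ "norm L + 1"] elim: eventually_mono)
qed

lemma holomorphic_on_ball_taylor_remainder:
  fixes f :: "complex \<Rightarrow> complex"
  assumes "f holomorphic_on ball 0 r" "r > 0"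
  shows "\<exists>c R. R holomorphic_on ball 0 r \<and> (\<forall>z\<in>ball 0 r. f z = (\<Sum>j<N. c j * z ^ j) + z ^ N * R z)"
proof (induction N)
  case 0
  show ?case using assms(1) by auto
next
  case (Suc N)
  then obtain c R where R: "R holomorphic_on ball 0 r"
    and eq: "\<forall>z\<in>ball 0 r. f z = (\<Sum>j<N. c j * z ^ j) + z ^ N * R z"
    by blast
  define R' where "R' z = (if z = 0 then deriv R 0 else (R z - R 0) / (z - 0))" for z
  have "R' holomorphic_on ball 0 r"
    unfolding R'_def using assms(2) by (intro pole_lemma[OF R]) auto
  moreover have "f z = (\<Sum>j<Suc N. (c(N := R 0)) j * z ^ j) + z ^ Suc N * R' z"
    if "z \<in> ball 0 r" for z
  proof -
    have "R z = R 0 + z * R' z"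
      by (simp add: R'_def field_simps)
    moreover have "(\<Sum>j<N. c j * z ^ j) = (\<Sum>j<N. (c(N := R 0)) j * z ^ j)"
      by (rule sum.cong) auto
    ultimately show ?thesis
      using eq that by (simp add: algebra_simps)
  qed
  ultimately show ?case
    by blast
qed

lemma holomorphic_over_power_principal_part:
  fixes Q :: "complex \<Rightarrow> complex"
  assumes Q: "Q holomorphic_on ball 0 r" and "r > 0" "N > 0"
  obtains b R where "R holomorphic_on ball 0 r" "b N = Q 0" "\<forall>k>N. b k = 0"
    "\<And>z. z \<in> ball 0 r - {0} \<Longrightarrow> Q z / z ^ N = (\<Sum>k=1..N. b k / z ^ k) + R z"
proof -
  obtain c R where R: "R holomorphic_on ball 0 r"
    and c: "\<forall>z\<in>ball 0 r. Q z = (\<Sum>j<N. c j * z ^ j) + z ^ N * R z"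
    using holomorphic_on_ball_taylor_remainder[OF Q \<open>r > 0\<close>] by blast
  define b where "b k = (if k \<le> N then c (N - k) else 0)" for k
  have "Q z / z ^ N = (\<Sum>k=1..N. b k / z ^ k) + R z" if z: "z \<in> ball 0 r - {0}" for z
  proof -
    have "(\<Sum>j<N. c j * z ^ j) / z ^ N = (\<Sum>j<N. c j / z ^ (N - j))"
      unfolding sum_divide_distrib
    proof (rule sum.cong)
      fix j assume "j \<in> {..<N}"
      then have "z ^ N = z ^ j * z ^ (N - j)"
        by (simp flip: power_add)
      then show "c j * z ^ j / z ^ N = c j / z ^ (N - j)"
        using z by simp
    qed simp
    also have "\<dots> = (\<Sum>k=1..N. c (N - k) / z ^ k)"
      by (rule sum.reindex_bij_witness[of _ "\<lambda>k. N - k" "\<lambda>j. N - j"]) auto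
    also have "\<dots> = (\<Sum>k=1..N. b k / z ^ k)"
      by (rule sum.cong) (auto simp: b_def)
    finally show ?thesis
      using c z by (simp add: add_divide_distrib)
  qed
  moreover have "c 0 = Q 0"
    using c \<open>r > 0\<close> \<open>N > 0\<close> by (simp add: zero_power)
  ultimately show ?thesis
    using that[of R b] R by (simp add: b_def)
qed

lemma sum_inverse_powers_extend:
  fixes z :: complex
  assumes "\<forall>k>N. b k = 0" "N \<le> M"
  shows "(\<Sum>k=1..N. b k / z ^ k) = (\<Sum>k=1..M. b k / z ^ k)"
  using assms by (intro sum.mono_neutral_left) auto

lemma residue_inverse_power:
  assumes "k \<ge> 2"
  shows "residue (\<lambda>z. b / z ^ k) 0 = 0"
proof -
  obtain n where k: "k = Suc (Suc n)"
    using assms by (metis add_2_eq_Suc le_Suc_ex)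
  have "residue (\<lambda>z. (\<lambda>_. b) z / z ^ Suc (Suc n)) 0 = (deriv ^^ Suc n) (\<lambda>_. b) 0 / fact (Suc n)"
    by (rule residue_holomorphic_over_power'[of UNIV]) auto
  moreover have "(deriv ^^ Suc n) (\<lambda>_. b) = (\<lambda>_. 0)"
    by (induction n) simp_all
  ultimately show ?thesis
    using k by simp
qed

lemma residue_sum_inverse_powers:
  assumes "finite S" "\<forall>k\<in>S. k \<ge> 2"
  shows "residue (\<lambda>z. \<Sum>k\<in>S. b k / z ^ k) 0 = 0"
  using assms
proof (induction S rule: finite_induct)
  case empty
  then show ?case by (simp add: residue_const)
next
  case (insert k S)
  have "residue (\<lambda>z. b k / z ^ k + (\<Sum>k\<in>S. b k / z ^ k)) 0
     = residue (\<lambda>z. b k / z ^ k) 0 + residue (\<lambda>z. \<Sum>k\<in>S. b k / z ^ k) 0"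
    by (rule residue_add[of UNIV]) (auto intro!: holomorphic_intros)
  then show ?case
    using insert by (simp add: residue_inverse_power)
qed

lemma residue_principal_part:
  assumes "r > 0" "R holomorphic_on ball 0 r" "N > 0"
    and f: "\<forall>z\<in>ball 0 r - {0}. f z = (\<Sum>k=1..N. b k / z ^ k) + R z"
  shows "residue f 0 = b 1"
proof -
  define P where "P z = (\<Sum>k=2..N. b k / z ^ k)" for z
  have P: "P holomorphic_on UNIV - {0}"
    unfolding P_def by (intro holomorphic_intros) auto
  have "\<forall>\<^sub>F z in at 0. z \<in> ball 0 r - {0}"
    using \<open>r > 0\<close> by (intro eventually_at_in_open) auto
  then have "\<forall>\<^sub>F z in at 0. f z = (b 1 / z + P z) + R z"
  proof eventually_elim
    case (elim z)
    have "(\<Sum>k=1..N. b k / z ^ k) = b 1 / z + P z"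
      unfolding P_def using \<open>N > 0\<close> by (simp add: sum.atLeast_Suc_atMost numeral_2_eq_2)
    then show ?case
      using f elim by simp
  qed
  then have "residue f 0 = residue (\<lambda>z. (b 1 / z + P z) + R z) 0"
    by (rule residue_cong) simp
  also have "\<dots> = residue (\<lambda>z. b 1 / z + P z) 0 + residue R 0"
    using assms(1,2) P
    by (intro residue_add[of "ball 0 r"]) (auto intro!: holomorphic_intros)
  also have "residue (\<lambda>z. b 1 / z + P z) 0 = residue (\<lambda>z. b 1 / z) 0 + residue P 0"
    using P by (intro residue_add[of UNIV]) (auto intro!: holomorphic_intros)
  also have "residue (\<lambda>z. b 1 / z) 0 = b 1"
    using residue_simple[of UNIV 0 "\<lambda>_. b 1"] by simp
  also have "residue P 0 = 0"
    unfolding P_def by (rule residue_sum_inverse_powers) auto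
  also have "residue R 0 = 0"
    using assms(1,2) by (intro residue_holo[of "ball 0 r"]) auto
  finally show ?thesis
    by simp
qed

lemma sum_inverse_powers_split:
  fixes z :: complex
  shows "(\<Sum>k=1..m + 2. b k / z ^ k) = b 1 / z + b 2 / z ^ 2 + (\<Sum>k=1..m. b (k + 2) / z ^ (k + 2))"
proof -
  define f where "f k = b k / z ^ k" for k
  have "(\<Sum>k=1..m + 2. f k) = (\<Sum>k\<in>{1..2} \<union> {3..m + 2}. f k)"
    by (rule sum.cong) auto
  also have "\<dots> = (\<Sum>k=1..2. f k) + (\<Sum>k=3..m + 2. f k)"
    by (rule sum.union_disjoint) auto
  also have "(\<Sum>k=3..m + 2. f k) = (\<Sum>k=1..m. f (k + 2))"
    by (rule sum.reindex_bij_witness[of _ "\<lambda>k. k + 2" "\<lambda>k. k - 2"])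
      (auto intro!: arg_cong[where f = f])
  finally show ?thesis
    by (simp add: f_def numeral_2_eq_2)
qed

lemma residue_principal_parts3:
  fixes X Rv :: "complex \<Rightarrow> complex^4"
  assumes "r > 0" "N > 0" and Rv: "\<And>i. (\<lambda>z. Rv z $ i) holomorphic_on ball 0 r"
    and X: "\<forall>z\<in>ball 0 r - {0}. X z = (\<Sum>k=1..N. b k / z ^ k) *s u + (\<Sum>k=1..N. p k / z ^ k) *s v
                                      + (\<Sum>k=1..N. q k / z ^ k) *s w + Rv z"
  shows "residue (\<lambda>z. X z $ i) 0 = b 1 * u $ i + p 1 * v $ i + q 1 * w $ i"
proof (rule residue_principal_part[OF \<open>r > 0\<close> Rv \<open>N > 0\<close> ballI])
  fix z :: complex assume "z \<in> ball 0 r - {0}"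
  moreover have "(\<Sum>k\<in>K. (b k * u $ i + p k * v $ i + q k * w $ i) / z ^ k)
      = (\<Sum>k\<in>K. b k / z ^ k) * u $ i + (\<Sum>k\<in>K. p k / z ^ k) * v $ i + (\<Sum>k\<in>K. q k / z ^ k) * w $ i"
    for K
    by (simp add: add_divide_distrib sum.distrib sum_distrib_right)
  ultimately show "X z $ i = (\<Sum>k=1..N. (b k * u $ i + p k * v $ i + q k * w $ i) / z ^ k) + Rv z $ i"
    using X by (simp add: algebra_simps)
qed

lemma frame_principal_parts:
  fixes X :: "complex \<Rightarrow> complex^4" and H F G :: "complex \<Rightarrow> complex"
  assumes r: "r > 0" and m: "m \<ge> 1"
    and H: "H holomorphic_on ball 0 r" and F: "F holomorphic_on ball 0 r" and G: "G holomorphic_on ball 0 r"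
    and X: "\<forall>z\<in>ball 0 r - {0}. X z = (H z / z ^ (m + 2)) *s
              (u0 + (z ^ m * F z) *s u1 + (z ^ (m + 1) * G z) *s u2
                  + (z ^ m * F z * (z ^ (m + 1) * G z)) *s e)"
  obtains b p q :: "nat \<Rightarrow> complex" and Rv :: "complex \<Rightarrow> complex^4"
  where "b (m + 2) = H 0" "p 2 = H 0 * F 0" "\<forall>k>2. p k = 0" "\<forall>k>1. q k = 0"
    "\<And>i. (\<lambda>z. Rv z $ i) holomorphic_on ball 0 r"
    "\<forall>z\<in>ball 0 r - {0}. X z = (\<Sum>k=1..m + 2. b k / z ^ k) *s u0 + (\<Sum>k=1..m + 2. p k / z ^ k) *s u1
                                + (\<Sum>k=1..m + 2. q k / z ^ k) *s u2 + Rv z"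
proof -
  define R3 where "R3 z = H z * F z * G z * z ^ (m - 1)" for z
  obtain b R0 where R0: "R0 holomorphic_on ball 0 r" "b (m + 2) = H 0" "\<forall>k>m + 2. b k = 0"
    and b: "\<And>z. z \<in> ball 0 r - {0} \<Longrightarrow> H z / z ^ (m + 2) = (\<Sum>k=1..m + 2. b k / z ^ k) + R0 z"
    by (rule holomorphic_over_power_principal_part[OF H r, of "m + 2"]) (simp, blast)
  obtain p R1 where R1: "R1 holomorphic_on ball 0 r" "p 2 = H 0 * F 0" "\<forall>k>2. p k = 0"
    and p: "\<And>z. z \<in> ball 0 r - {0} \<Longrightarrow> H z * F z / z ^ 2 = (\<Sum>k=1..2. p k / z ^ k) + R1 z"
    by (rule holomorphic_over_power_principal_part[OF holomorphic_on_mult[OF H F] r, of 2]) (simp, blast)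
  obtain q R2 where R2: "R2 holomorphic_on ball 0 r" "\<forall>k>1. q k = 0"
    and q: "\<And>z. z \<in> ball 0 r - {0} \<Longrightarrow> H z * G z / z ^ 1 = (\<Sum>k=1..1. q k / z ^ k) + R2 z"
    by (rule holomorphic_over_power_principal_part[OF holomorphic_on_mult[OF H G] r, of 1]) (simp, blast)
  define Rv where "Rv z = R0 z *s u0 + R1 z *s u1 + R2 z *s u2 + R3 z *s e" for z
  have "(\<lambda>z. Rv z $ i) holomorphic_on ball 0 r" for i
    unfolding Rv_def R3_def vector_add_component vector_smult_component
    by (intro holomorphic_intros R0(1) R1(1) R2(1) H F G)
  moreover have "X z = (\<Sum>k=1..m + 2. b k / z ^ k) *s u0 + (\<Sum>k=1..m + 2. p k / z ^ k) *s u1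
                       + (\<Sum>k=1..m + 2. q k / z ^ k) *s u2 + Rv z"
    if z: "z \<in> ball 0 r - {0}" for z
  proof -
    have "z \<noteq> 0" using z by simp
    have "z ^ (m + 2) = z ^ m * z ^ 2" "z ^ (m + 2) = z ^ (m + 1) * z"
      "z ^ m * z ^ (m + 1) = z ^ (m + 2) * z ^ (m - 1)"
      using m by (cases m; simp add: power_add power2_eq_square algebra_simps)+
    with \<open>z \<noteq> 0\<close> X z have "X z = (H z / z ^ (m + 2)) *s u0 + (H z * F z / z ^ 2) *s u1
                                  + (H z * G z / z ^ 1) *s u2 + R3 z *s e"
      by (simp add: R3_def field_simps)
    moreover have "(\<Sum>k=1..2. p k / z ^ k) = (\<Sum>k=1..m + 2. p k / z ^ k)"
      by (rule sum_inverse_powers_extend[OF R1(3)]) simp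
    moreover have "(\<Sum>k=1..1. q k / z ^ k) = (\<Sum>k=1..m + 2. q k / z ^ k)"
      by (rule sum_inverse_powers_extend[OF R2(2)]) simp
    ultimately show ?thesis
      using b[OF z] p[OF z] q[OF z] by (simp add: Rv_def algebra_simps)
  qed
  ultimately show ?thesis
    using that R0(2) R1(2,3) R2(2) by blast
qed

lemma frame_laurent_expansion:
  fixes X :: "complex \<Rightarrow> complex^4" and H F G :: "complex \<Rightarrow> complex"
  assumes r: "r > 0" and m: "m \<ge> 1"
    and H: "H holomorphic_on ball 0 r" "H 0 \<noteq> 0"
    and F: "F holomorphic_on ball 0 r" "F 0 \<noteq> 0" and G: "G holomorphic_on ball 0 r"
    and X: "\<forall>z\<in>ball 0 r - {0}. X z = (H z / z ^ (m + 2)) *s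
              (u0 + (z ^ m * F z) *s u1 + (z ^ (m + 1) * G z) *s u2
                  + (z ^ m * F z * (z ^ (m + 1) * G z)) *s e)"
    and flux: "\<forall>i. residue (\<lambda>z. X z $ i) 0 = 0"
    and indep: "independent3_complex u0 u1 u2"
  shows "\<exists>\<alpha> a \<beta>. \<alpha> (m + 2) \<noteq> 0 \<and> \<beta> \<noteq> 0 \<and> (\<exists>B. \<forall>\<^sub>F z in at 0.
           norm (X z - (\<Sum>k=1..m. \<alpha> (k + 2) / z ^ (k + 2)) *s u0
                 - (1 / z ^ 2) *s (a *s u0 + \<beta> *s u1)) \<le> B)"
proof -
  obtain b p q and Rv :: "complex \<Rightarrow> complex^4" where coeffs: "b (m + 2) = H 0" "p 2 = H 0 * F 0" "\<forall>k>2. p k = 0" "\<forall>k>1. q k = 0"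
    and Rv: "\<And>i. (\<lambda>z. Rv z $ i) holomorphic_on ball 0 r"
    and X_parts: "\<forall>z\<in>ball 0 r - {0}. X z = (\<Sum>k=1..m + 2. b k / z ^ k) *s u0
        + (\<Sum>k=1..m + 2. p k / z ^ k) *s u1 + (\<Sum>k=1..m + 2. q k / z ^ k) *s u2 + Rv z"
    using frame_principal_parts[OF r m H(1) F(1) G X] by blast
  have "b 1 *s u0 + p 1 *s u1 + q 1 *s u2 = 0"
    using flux residue_principal_parts3[OF r _ Rv X_parts] by (simp add: vec_eq_iff)
  with indep have "b 1 = 0" "p 1 = 0" "q 1 = 0"
    unfolding independent3_complex_def by blast+
  have "X z - (\<Sum>k=1..m. b (k + 2) / z ^ (k + 2)) *s u0 - (1 / z ^ 2) *s (b 2 *s u0 + p 2 *s u1) = Rv z"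
    if z: "z \<in> ball 0 r - {0}" for z
  proof -
    have "(\<Sum>k=1..m + 2. p k / z ^ k) = p 1 / z + p 2 / z ^ 2"
      using sum_inverse_powers_extend[OF coeffs(3), of "m + 2" z] by (simp add: numeral_2_eq_2)
    moreover have "(\<Sum>k=1..m + 2. q k / z ^ k) = q 1 / z"
      using sum_inverse_powers_extend[OF coeffs(4), of "m + 2" z] by simp
    moreover note X_parts[rule_format, OF z]
    ultimately show ?thesis
      unfolding sum_inverse_powers_split using \<open>b 1 = 0\<close> \<open>p 1 = 0\<close> \<open>q 1 = 0\<close>
      by (simp add: vec_eq_iff algebra_simps)
  qed
  moreover have "(Rv \<longlongrightarrow> Rv 0) (at 0)"
    using r Rv by (intro vec_tendstoI holomorphic_on_ball_tendsto_center)
  then obtain B where "\<forall>\<^sub>F z in at 0. norm (Rv z) \<le> B"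
    using tendsto_imp_eventually_norm_le by blast
  moreover have "\<forall>\<^sub>F z in at 0. z \<in> ball 0 r - {0}"
    using r by (intro eventually_at_in_open) auto
  ultimately have "\<forall>\<^sub>F z in at 0. norm (X z - (\<Sum>k=1..m. b (k + 2) / z ^ (k + 2)) *s u0
                 - (1 / z ^ 2) *s (b 2 *s u0 + p 2 *s u1)) \<le> B"
    by (auto elim: eventually_elim2)
  with coeffs(1,2) H(2) F(2) show ?thesis
    by (intro exI[of _ b] exI[of _ "b 2"] exI[of _ "p 2"]) auto
qed

section \<open>Local normal forms of the Gauss maps\<close>

lemma value_mult_expansion:
  fixes \<phi> :: "complex \<Rightarrow> complex"
  assumes r: "r > 0" and hol: "\<phi> holomorphic_on ball 0 r - {0}" and lim: "(\<phi> \<longlongrightarrow> c) (at 0)"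
    and mult: "value_mult \<phi> c = enat k"
  obtains \<rho> F where "\<rho> > 0" "\<rho> \<le> r" "F holomorphic_on ball 0 \<rho>" "F 0 \<noteq> 0"
    "\<forall>w\<in>ball 0 \<rho> - {0}. \<phi> w = c + w ^ k * F w"
proof -
  have not_const: "\<not> (\<forall>\<^sub>F z in at 0. \<phi> z = c)" and k: "k = nat (zorder (\<lambda>z. \<phi> z - c) 0)"
    using mult unfolding value_mult_def by (auto split: if_splits)
  define f where "f z = (if z = 0 then c else \<phi> z) - c" for z
  have f_hol: "f holomorphic_on ball 0 r"
    unfolding f_def by (intro holomorphic_intros removable_singularity hol lim) auto
  have non_const: "\<exists>w\<in>ball 0 r. f w \<noteq> 0"
  proof (rule ccontr)
    assume const: "\<not> (\<exists>w\<in>ball 0 r. f w \<noteq> 0)"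
    have "\<forall>\<^sub>F z in at 0. z \<in> ball 0 r - {0}"
      using r by (intro eventually_at_in_open) auto
    then have "\<forall>\<^sub>F z in at 0. \<phi> z = c"
    proof eventually_elim
      case (elim z)
      with const have "f z = 0"
        by blast
      with elim show ?case
        by (simp add: f_def)
    qed
    with not_const show False by simp
  qed
  have "0 \<in> ball (0::complex) r"
    using r by simp
  from zorder_exist_zero[OF f_hol open_ball connected_ball this non_const]
  obtain \<rho> where \<rho>: "\<rho> > 0" "cball (0::complex) \<rho> \<subseteq> ball 0 r" "zor_poly f 0 holomorphic_on cball 0 \<rho>"
     "\<forall>w\<in>cball 0 \<rho>. f w = zor_poly f 0 w * (w - 0) ^ nat (zorder f 0) \<and> zor_poly f 0 w \<noteq> 0"
    by auto
  have "zorder f 0 = zorder (\<lambda>z. \<phi> z - c) 0"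
    by (rule zorder_cong) (auto simp: f_def eventually_at_filter)
  have "\<forall>w\<in>ball 0 \<rho> - {0}. \<phi> w = c + w ^ k * zor_poly f 0 w"
  proof
    fix w :: complex assume w: "w \<in> ball 0 \<rho> - {0}"
    then have "f w = zor_poly f 0 w * w ^ k"
      using \<rho>(4) k \<open>zorder f 0 = zorder (\<lambda>z. \<phi> z - c) 0\<close> by auto
    with w show "\<phi> w = c + w ^ k * zor_poly f 0 w"
      by (simp add: f_def algebra_simps)
  qed
  moreover have "\<rho> \<le> r"
    using \<rho>(1,2) by (simp add: cball_subset_ball_iff)
  moreover have "zor_poly f 0 holomorphic_on ball 0 \<rho>"
    using \<rho>(3) by (rule holomorphic_on_subset) auto
  moreover have "zor_poly f 0 0 \<noteq> 0"
    using \<rho>(1,4) by simp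
  ultimately show ?thesis
    using that \<rho>(1) by blast
qed

lemma value_mult_greater_expansion:
  fixes \<phi> :: "complex \<Rightarrow> complex"
  assumes r: "r > 0" and hol: "\<phi> holomorphic_on ball 0 r - {0}" and lim: "(\<phi> \<longlongrightarrow> c) (at 0)"
    and mult: "enat k < value_mult \<phi> c"
  obtains \<rho> G where "\<rho> > 0" "\<rho> \<le> r" "G holomorphic_on ball 0 \<rho>"
    "\<forall>w\<in>ball 0 \<rho> - {0}. \<phi> w = c + w ^ Suc k * G w"
proof (cases "value_mult \<phi> c")
  case (enat n)
  obtain \<rho> G where \<rho>: "\<rho> > 0" "\<rho> \<le> r" "G holomorphic_on ball 0 \<rho>"
    and G: "\<forall>w\<in>ball 0 \<rho> - {0}. \<phi> w = c + w ^ n * G w"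
    using value_mult_expansion[OF r hol lim enat] by blast
  have "n = Suc k + (n - Suc k)"
    using mult enat by simp
  then have "w ^ n * G w = w ^ Suc k * (w ^ (n - Suc k) * G w)" for w :: complex
    by (metis power_add mult.assoc)
  with G have "\<forall>w\<in>ball 0 \<rho> - {0}. \<phi> w = c + w ^ Suc k * (w ^ (n - Suc k) * G w)"
    by simp
  moreover have "(\<lambda>w. w ^ (n - Suc k) * G w) holomorphic_on ball 0 \<rho>"
    by (intro holomorphic_intros \<rho>(3))
  ultimately show ?thesis
    using that \<rho>(1,2) by blast
next
  case infinity
  have "\<forall>\<^sub>F z in at 0. \<phi> z = c"
    by (rule ccontr) (use infinity in \<open>simp add: value_mult_def\<close>)
  then obtain \<delta> where "\<delta> > 0" and \<delta>: "\<forall>z. z \<noteq> 0 \<and> dist z 0 < \<delta> \<longrightarrow> \<phi> z = c"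
    unfolding eventually_at by auto
  show ?thesis
  proof (rule that[of "min \<delta> r" "\<lambda>_. 0"])
    show "min \<delta> r > 0"
      using \<open>\<delta> > 0\<close> r by simp
    show "\<forall>w\<in>ball 0 (min \<delta> r) - {0}. \<phi> w = c + w ^ Suc k * 0"
      using \<delta> by (simp add: dist_norm)
  qed simp_all
qed

lemma pole_mult_expansion:
  fixes \<phi> :: "complex \<Rightarrow> complex"
  assumes r: "r > 0" and hol: "\<phi> holomorphic_on ball 0 r - {0}" and pole: "is_pole \<phi> 0"
    and mult: "pole_mult \<phi> = enat k"
  obtains \<rho> F where "\<rho> > 0" "\<rho> \<le> r" "F holomorphic_on ball 0 \<rho>" "F 0 \<noteq> 0"
    "\<forall>w\<in>ball 0 \<rho> - {0}. \<phi> w \<noteq> 0 \<and> 1 / \<phi> w = w ^ k * F w"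
proof -
  define P where "P = zor_poly \<phi> 0"
  have "0 \<in> ball (0::complex) r"
    using r by simp
  note pole_form = zorder_exist_pole[OF hol open_ball this pole, folded P_def]
  then have "P 0 \<noteq> 0"
    by blast
  obtain \<rho> where \<rho>: "\<rho> > 0" "cball (0::complex) \<rho> \<subseteq> ball 0 r" "P holomorphic_on cball 0 \<rho>"
     "\<forall>w\<in>cball 0 \<rho> - {0}. \<phi> w = P w / (w - 0) ^ nat (- zorder \<phi> 0) \<and> P w \<noteq> 0"
    using pole_form by blast
  have k: "nat (- zorder \<phi> 0) = k"
    using mult by (simp add: pole_mult_def)
  have P_nonzero: "\<forall>w\<in>ball 0 \<rho>. P w \<noteq> 0"
    using \<open>P 0 \<noteq> 0\<close> \<rho>(4) by (metis Diff_iff ball_subset_cball singletonD subsetD)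
  have "(\<lambda>w. 1 / P w) holomorphic_on ball 0 \<rho>"
    using P_nonzero \<rho>(3) by (intro holomorphic_intros) auto
  moreover have "\<forall>w\<in>ball 0 \<rho> - {0}. \<phi> w \<noteq> 0 \<and> 1 / \<phi> w = w ^ k * (1 / P w)"
    using \<rho>(4) k by auto
  moreover have "\<rho> \<le> r"
    using \<rho>(1,2) by (simp add: cball_subset_ball_iff)
  ultimately show ?thesis
    using that \<rho>(1) \<open>P 0 \<noteq> 0\<close> by simp
qed

lemma pole_mult_greater_expansion:
  fixes \<phi> :: "complex \<Rightarrow> complex"
  assumes r: "r > 0" and hol: "\<phi> holomorphic_on ball 0 r - {0}" and pole: "is_pole \<phi> 0"
    and mult: "enat k < pole_mult \<phi>"
  obtains \<rho> G where "\<rho> > 0" "\<rho> \<le> r" "G holomorphic_on ball 0 \<rho>"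
    "\<forall>w\<in>ball 0 \<rho> - {0}. \<phi> w \<noteq> 0 \<and> 1 / \<phi> w = w ^ Suc k * G w"
proof -
  define n where "n = nat (- zorder \<phi> 0)"
  have "pole_mult \<phi> = enat n"
    by (simp add: pole_mult_def n_def)
  then obtain \<rho> G where \<rho>: "\<rho> > 0" "\<rho> \<le> r" "G holomorphic_on ball 0 \<rho>"
    and G: "\<forall>w\<in>ball 0 \<rho> - {0}. \<phi> w \<noteq> 0 \<and> 1 / \<phi> w = w ^ n * G w"
    using pole_mult_expansion[OF r hol pole] by blast
  have "n = Suc k + (n - Suc k)"
    using mult by (simp add: pole_mult_def n_def)
  then have "w ^ n * G w = w ^ Suc k * (w ^ (n - Suc k) * G w)" for w :: complex
    by (metis power_add mult.assoc)
  with G have "\<forall>w\<in>ball 0 \<rho> - {0}. \<phi> w \<noteq> 0 \<and> 1 / \<phi> w = w ^ Suc k * (w ^ (n - Suc k) * G w)"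
    by simp
  moreover have "(\<lambda>w. w ^ (n - Suc k) * G w) holomorphic_on ball 0 \<rho>"
    by (intro holomorphic_intros \<rho>(3))
  ultimately show ?thesis
    using that \<rho>(1,2) by blast
qed

section \<open>The expansion at the end\<close>

definition end_expansion :: "(complex \<Rightarrow> complex^4) \<Rightarrow> nat \<Rightarrow> bool" where
  "end_expansion X m \<longleftrightarrow>
     (\<exists>(\<alpha>::nat \<Rightarrow> complex) (v0::real^4) (v1::complex^4).
        \<alpha> (m + 2) \<noteq> 0 \<and> lightlike v0 \<and> isotropic v1 \<and>
        dim (span {v0, Re_vec v1, Im_vec v1}) = 3 \<and>
        degenerate_subspace (span {v0, Re_vec v1, Im_vec v1}) \<and>
        (\<exists>B. \<forall>\<^sub>F z in at 0.
           norm (X z - (\<Sum>k=1..m. \<alpha> (k + 2) / z ^ (k + 2)) *s cvec v0 - (1 / z ^ 2) *s v1) \<le> B))"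

lemma removable_pole_factor:
  fixes X W :: "complex \<Rightarrow> complex^4" and K :: "complex \<Rightarrow> complex"
  assumes r: "r > 0" and K: "K holomorphic_on ball 0 r - {0}"
    and X: "\<forall>z\<in>ball 0 r - {0}. X z = K z *s W z" and W: "(W \<longlongrightarrow> w0) (at 0)"
    and K_X: "\<forall>z\<in>ball 0 r - {0}. K z = p * X z $ 3 + q * X z $ 4"
    and pole: "((\<lambda>z. z ^ n *s X z) \<longlongrightarrow> L) (at 0)" "L \<noteq> 0"
  obtains H where "H holomorphic_on ball 0 r" "H 0 \<noteq> 0" "\<forall>z\<in>ball 0 r - {0}. K z = H z / z ^ n"
proof -
  define A where "A = p * L $ 3 + q * L $ 4"
  have near: "\<forall>\<^sub>F z in at 0. z \<in> ball 0 r - {0}"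
    using r by (intro eventually_at_in_open) auto
  have "((\<lambda>z. p * (z ^ n *s X z) $ 3 + q * (z ^ n *s X z) $ 4) \<longlongrightarrow> A) (at 0)"
    unfolding A_def by (intro tendsto_intros pole(1))
  moreover have "\<forall>\<^sub>F z in at 0. p * (z ^ n *s X z) $ 3 + q * (z ^ n *s X z) $ 4 = z ^ n * K z"
    using near by eventually_elim (use K_X in \<open>auto simp: algebra_simps\<close>)
  ultimately have "((\<lambda>z. z ^ n * K z) \<longlongrightarrow> A) (at 0)"
    by (rule Lim_transform_eventually)
  define H where "H z = (if z = 0 then A else z ^ n * K z)" for z
  have H_hol: "H holomorphic_on ball 0 r"
    unfolding H_def using \<open>((\<lambda>z. z ^ n * K z) \<longlongrightarrow> A) (at 0)\<close>
    by (intro removable_singularity) (auto intro!: holomorphic_intros K)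
  have "((\<lambda>z. H z * W z $ i) \<longlongrightarrow> H 0 * w0 $ i) (at 0)" for i
    by (intro tendsto_intros W holomorphic_on_ball_tendsto_center[OF H_hol r])
  then have "((\<lambda>z. H z *s W z) \<longlongrightarrow> H 0 *s w0) (at 0)"
    by (intro vec_tendstoI) simp
  moreover have "\<forall>\<^sub>F z in at 0. H z *s W z = z ^ n *s X z"
    using near by eventually_elim (use X in \<open>simp add: H_def vec_eq_iff\<close>)
  ultimately have "((\<lambda>z. z ^ n *s X z) \<longlongrightarrow> H 0 *s w0) (at 0)"
    by (rule Lim_transform_eventually)
  with pole have "L = H 0 *s w0"
    using tendsto_unique[OF trivial_limit_at] by blast
  with pole(2) have "H 0 \<noteq> 0"
    by auto
  moreover have "\<forall>z\<in>ball 0 r - {0}. K z = H z / z ^ n"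
    by (simp add: H_def)
  ultimately show ?thesis
    using that H_hol by blast
qed

lemma end_expansion_of_frame:
  fixes X :: "complex \<Rightarrow> complex^4" and K F G :: "complex \<Rightarrow> complex"
    and v :: "real^4" and w e L :: "complex^4"
  assumes r: "r > 0" and m: "m \<ge> 1"
    and K: "K holomorphic_on ball 0 r - {0}"
    and F: "F holomorphic_on ball 0 r" "F 0 \<noteq> 0" and G: "G holomorphic_on ball 0 r"
    and X: "\<forall>z\<in>ball 0 r - {0}. X z = K z *s (cvec v + (z ^ m * F z) *s w
              + (z ^ (m + 1) * G z) *s cnj_vec w + (z ^ m * F z * (z ^ (m + 1) * G z)) *s e)"
    and K_X: "\<forall>z\<in>ball 0 r - {0}. K z = p * X z $ 3 + q * X z $ 4"
    and pole: "((\<lambda>z. z ^ (m + 2) *s X z) \<longlongrightarrow> L) (at 0)" "L \<noteq> 0"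
    and flux: "\<forall>i. residue (\<lambda>z. X z $ i) 0 = 0"
    and frame: "null_frame v w"
  shows "end_expansion X m"
proof -
  define W where "W z = cvec v + (z ^ m * F z) *s w + (z ^ (m + 1) * G z) *s cnj_vec w
                        + (z ^ m * F z * (z ^ (m + 1) * G z)) *s e" for z
  have W_nth: "W z $ i = cvec v $ i + z ^ m * F z * w $ i + z ^ (m + 1) * G z * cnj_vec w $ i
                        + z ^ m * F z * (z ^ (m + 1) * G z) * e $ i" for z i
    by (simp add: W_def)
  have "((\<lambda>z. W z $ i) \<longlongrightarrow> W 0 $ i) (at 0)" for i
    unfolding W_nth using r F(1) G by (intro tendsto_intros holomorphic_on_ball_tendsto_center)
  then have "(W \<longlongrightarrow> W 0) (at 0)"
    by (rule vec_tendstoI)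
  moreover have "\<forall>z\<in>ball 0 r - {0}. X z = K z *s W z"
    using X by (simp add: W_def)
  ultimately obtain H where H: "H holomorphic_on ball 0 r" "H 0 \<noteq> 0"
    and K_H: "\<forall>z\<in>ball 0 r - {0}. K z = H z / z ^ (m + 2)"
    using removable_pole_factor[OF r K _ _ K_X pole] by blast
  have indep: "independent3_complex (cvec v) w (cnj_vec w)"
    using frame by (simp add: null_frame_def)
  have "\<forall>z\<in>ball 0 r - {0}. X z = (H z / z ^ (m + 2)) *s (cvec v + (z ^ m * F z) *s w
          + (z ^ (m + 1) * G z) *s cnj_vec w + (z ^ m * F z * (z ^ (m + 1) * G z)) *s e)"
    using X K_H by simp
  then obtain \<alpha> a \<beta> B where "\<alpha> (m + 2) \<noteq> 0" "\<beta> \<noteq> 0" and "\<forall>\<^sub>F z in at 0.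
      norm (X z - (\<Sum>k=1..m. \<alpha> (k + 2) / z ^ (k + 2)) *s cvec v
            - (1 / z ^ 2) *s (a *s cvec v + \<beta> *s w)) \<le> B"
    using frame_laurent_expansion[OF r m H F G _ flux indep] by blast
  then show ?thesis
    unfolding end_expansion_def using null_frame_span[OF frame \<open>\<beta> \<noteq> 0\<close>, of a]
    by blast
qed

lemma end_expansion_at_value_end:
  fixes \<phi> \<psi> h :: "complex \<Rightarrow> complex"
  assumes r: "r > 0" and m: "m \<ge> 1"
    and hol: "\<phi> holomorphic_on ball 0 r - {0}" "\<psi> holomorphic_on ball 0 r - {0}"
      "h holomorphic_on ball 0 r - {0}"
    and lim: "(\<phi> \<longlongrightarrow> c) (at 0)" "(\<psi> \<longlongrightarrow> cnj c) (at 0)"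
    and mult: "value_mult \<phi> c = enat m" "enat m < value_mult \<psi> (cnj c)"
    and pole: "((\<lambda>z. z ^ (m + 2) *s xz \<phi> \<psi> h z) \<longlongrightarrow> L) (at 0)" "L \<noteq> 0"
    and flux: "\<forall>i. residue (\<lambda>z. xz \<phi> \<psi> h z $ i) 0 = 0"
  shows "end_expansion (xz \<phi> \<psi> h) m"
proof -
  obtain \<rho>1 F where \<rho>1: "\<rho>1 > 0" "\<rho>1 \<le> r" "F holomorphic_on ball 0 \<rho>1" "F 0 \<noteq> 0"
    and \<phi>: "\<forall>w\<in>ball 0 \<rho>1 - {0}. \<phi> w = c + w ^ m * F w"
    using value_mult_expansion[OF r hol(1) lim(1) mult(1)] by blast
  obtain \<rho>2 G where \<rho>2: "\<rho>2 > 0" "\<rho>2 \<le> r" "G holomorphic_on ball 0 \<rho>2"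
    and \<psi>: "\<forall>w\<in>ball 0 \<rho>2 - {0}. \<psi> w = cnj c + w ^ Suc m * G w"
    using value_mult_greater_expansion[OF r hol(2) lim(2) mult(2)] by blast
  define \<rho> where "\<rho> = min \<rho>1 \<rho>2"
  have sub: "ball (0::complex) \<rho> \<subseteq> ball 0 \<rho>1" "ball (0::complex) \<rho> \<subseteq> ball 0 \<rho>2"
    "ball (0::complex) \<rho> \<subseteq> ball 0 r"
    using \<rho>1(2) by (auto simp: \<rho>_def)
  show ?thesis
  proof (rule end_expansion_of_frame[where r = \<rho> and m = m and X = "xz \<phi> \<psi> h" and F = F and G = G
        and K = h and p = "1 / 2" and q = "1 / 2" and e = "vec4 0 0 (- 1) 1",
        OF _ m _ _ \<rho>1(4) _ _ _ pole flux null_frame_value])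
    show "\<rho> > 0"
      using \<rho>1(1) \<rho>2(1) by (simp add: \<rho>_def)
    show "h holomorphic_on ball 0 \<rho> - {0}"
      using hol(3) by (rule holomorphic_on_subset) (use sub in auto)
    show "F holomorphic_on ball 0 \<rho>" "G holomorphic_on ball 0 \<rho>"
      using \<rho>1(3) \<rho>2(3) sub by auto
    show "\<forall>z\<in>ball 0 \<rho> - {0}. xz \<phi> \<psi> h z = h z *s (cvec (null_vec c) + (z ^ m * F z) *s null_tangent c
        + (z ^ (m + 1) * G z) *s cnj_vec (null_tangent c) + (z ^ m * F z * (z ^ (m + 1) * G z)) *s vec4 0 0 (- 1) 1)"
    proof
      fix z :: complex assume "z \<in> ball 0 \<rho> - {0}"
      with sub have "z \<in> ball 0 \<rho>1 - {0}" "z \<in> ball 0 \<rho>2 - {0}"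
        by auto
      with \<phi> \<psi> have "\<phi> z = c + z ^ m * F z" "\<psi> z = cnj c + z ^ (m + 1) * G z"
        by simp_all
      then show "xz \<phi> \<psi> h z = h z *s (cvec (null_vec c) + (z ^ m * F z) *s null_tangent c
        + (z ^ (m + 1) * G z) *s cnj_vec (null_tangent c) + (z ^ m * F z * (z ^ (m + 1) * G z)) *s vec4 0 0 (- 1) 1)"
        by (rule xz_value_frame)
    qed
    show "\<forall>z\<in>ball 0 \<rho> - {0}. h z = 1 / 2 * xz \<phi> \<psi> h z $ 3 + 1 / 2 * xz \<phi> \<psi> h z $ 4"
      by (simp add: xz_def field_simps)
  qed
qed

lemma end_expansion_at_pole_end:
  fixes \<phi> \<psi> h :: "complex \<Rightarrow> complex"
  assumes r: "r > 0" and m: "m \<ge> 1"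
    and hol: "\<phi> holomorphic_on ball 0 r - {0}" "\<psi> holomorphic_on ball 0 r - {0}"
      "h holomorphic_on ball 0 r - {0}"
    and poles: "is_pole \<phi> 0" "is_pole \<psi> 0"
    and mult: "pole_mult \<phi> = enat m" "enat m < pole_mult \<psi>"
    and pole: "((\<lambda>z. z ^ (m + 2) *s xz \<phi> \<psi> h z) \<longlongrightarrow> L) (at 0)" "L \<noteq> 0"
    and flux: "\<forall>i. residue (\<lambda>z. xz \<phi> \<psi> h z $ i) 0 = 0"
  shows "end_expansion (xz \<phi> \<psi> h) m"
proof -
  obtain \<rho>1 F where \<rho>1: "\<rho>1 > 0" "\<rho>1 \<le> r" "F holomorphic_on ball 0 \<rho>1" "F 0 \<noteq> 0"
    and \<phi>: "\<forall>w\<in>ball 0 \<rho>1 - {0}. \<phi> w \<noteq> 0 \<and> 1 / \<phi> w = w ^ m * F w"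
    using pole_mult_expansion[OF r hol(1) poles(1) mult(1)] by blast
  obtain \<rho>2 G where \<rho>2: "\<rho>2 > 0" "\<rho>2 \<le> r" "G holomorphic_on ball 0 \<rho>2"
    and \<psi>: "\<forall>w\<in>ball 0 \<rho>2 - {0}. \<psi> w \<noteq> 0 \<and> 1 / \<psi> w = w ^ Suc m * G w"
    using pole_mult_greater_expansion[OF r hol(2) poles(2) mult(2)] by blast
  define \<rho> where "\<rho> = min \<rho>1 \<rho>2"
  have sub: "ball (0::complex) \<rho> \<subseteq> ball 0 \<rho>1" "ball (0::complex) \<rho> \<subseteq> ball 0 \<rho>2"
    "ball (0::complex) \<rho> \<subseteq> ball 0 r"
    using \<rho>1(2) by (auto simp: \<rho>_def)
  show ?thesis
  proof (rule end_expansion_of_frame[where r = \<rho> and m = m and X = "xz \<phi> \<psi> h" and F = F and G = G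
        and K = "\<lambda>z. h z * \<phi> z * \<psi> z"
        and p = "- 1 / 2" and q = "1 / 2" and e = "vec4 0 0 1 1",
        OF _ m _ _ \<rho>1(4) _ _ _ pole flux null_frame_infinity])
    show "\<rho> > 0"
      using \<rho>1(1) \<rho>2(1) by (simp add: \<rho>_def)
    show "(\<lambda>z. h z * \<phi> z * \<psi> z) holomorphic_on ball 0 \<rho> - {0}"
      using hol sub by (intro holomorphic_intros) auto
    show "F holomorphic_on ball 0 \<rho>" "G holomorphic_on ball 0 \<rho>"
      using \<rho>1(3) \<rho>2(3) sub by auto
    show "\<forall>z\<in>ball 0 \<rho> - {0}. xz \<phi> \<psi> h z = (h z * \<phi> z * \<psi> z) *s (cvec null_vec_infinity
        + (z ^ m * F z) *s null_tangent_infinity + (z ^ (m + 1) * G z) *s cnj_vec null_tangent_infinity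
        + (z ^ m * F z * (z ^ (m + 1) * G z)) *s vec4 0 0 1 1)"
    proof
      fix z :: complex assume "z \<in> ball 0 \<rho> - {0}"
      with sub have "z \<in> ball 0 \<rho>1 - {0}" "z \<in> ball 0 \<rho>2 - {0}"
        by auto
      with \<phi> \<psi> have "\<phi> z \<noteq> 0" "\<psi> z \<noteq> 0" "1 / \<phi> z = z ^ m * F z" "1 / \<psi> z = z ^ (m + 1) * G z"
        by simp_all
      then show "xz \<phi> \<psi> h z = (h z * \<phi> z * \<psi> z) *s (cvec null_vec_infinity
        + (z ^ m * F z) *s null_tangent_infinity + (z ^ (m + 1) * G z) *s cnj_vec null_tangent_infinity
        + (z ^ m * F z * (z ^ (m + 1) * G z)) *s vec4 0 0 1 1)"
        using xz_pole_frame[of \<phi> z \<psi> h] by simp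
    qed
    show "\<forall>z\<in>ball 0 \<rho> - {0}. h z * \<phi> z * \<psi> z = - 1 / 2 * xz \<phi> \<psi> h z $ 3 + 1 / 2 * xz \<phi> \<psi> h z $ 4"
      by (simp add: xz_def field_simps)
  qed
qed

lemma end_index_positive:
  assumes "end_index m' n' = int m" "m \<ge> 1"
  shows "m' = enat m" "m' < n'"
proof -
  show "m' < n'"
  proof (rule ccontr)
    assume "\<not> m' < n'"
    with assms show False
      by (simp add: end_index_def)
  qed
  then show "m' = enat m"
    using assms(1) by (cases m') (auto simp: end_index_def)
qed

theorem mainTheorem4:
  fixes \<phi> \<psi> h :: "complex \<Rightarrow> complex" and r :: real
    and m' n' :: enat and m d :: nat
  assumes r: "r > 0"
    and hol: "\<phi> holomorphic_on (ball 0 r - {0})" "\<psi> holomorphic_on (ball 0 r - {0})"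
             "h holomorphic_on (ball 0 r - {0})"
    and mero: "not_essential \<phi> 0" "not_essential \<psi> 0" "not_essential h 0"
    and spacelike: "\<forall>z \<in> ball 0 r - {0}. \<phi> z \<noteq> cnj (\<psi> z)"
    and immersed: "\<forall>z \<in> ball 0 r - {0}. h z \<noteq> 0"
    and singular: "singular_end_mults \<phi> \<psi> m' n'"
    and good: "m' \<noteq> n'"
    and ind: "end_index m' n' = int m" "m \<ge> 1"
    and pole: "vpole_order (xz \<phi> \<psi> h) (d + 1)"
    and mult1: "int d - \<bar>end_index m' n'\<bar> = 1"
    and flux: "\<forall>i. residue (\<lambda>z. xz \<phi> \<psi> h z $ i) 0 = 0"
  shows "\<exists>(\<alpha>::nat \<Rightarrow> complex) (v0::real^4) (v1::complex^4).
           \<alpha> (m + 2) \<noteq> 0 \<and> lightlike v0 \<and> isotropic v1 \<and>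
           dim (span {v0, Re_vec v1, Im_vec v1}) = 3 \<and>
           degenerate_subspace (span {v0, Re_vec v1, Im_vec v1}) \<and>
           (\<exists>B. \<forall>\<^sub>F z in at 0.
              norm (xz \<phi> \<psi> h z - (\<Sum>k=1..m. \<alpha> (k + 2) / z ^ (k + 2)) *s cvec v0
                    - (1 / z ^ 2) *s v1) \<le> B)"
proof -
  have m': "m' = enat m" "m' < n'"
    using end_index_positive[OF ind] by simp_all
  have "d + 1 = m + 2"
    using mult1 ind(1) by simp
  with pole obtain L where L: "((\<lambda>z. z ^ (m + 2) *s xz \<phi> \<psi> h z) \<longlongrightarrow> L) (at 0)" "L \<noteq> 0"
    unfolding vpole_order_def by auto
  from singular consider
      (pole_end) "is_pole \<phi> 0" "is_pole \<psi> 0" "m' = pole_mult \<phi>" "n' = pole_mult \<psi>"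
    | (value_end) c where "(\<phi> \<longlongrightarrow> c) (at 0)" "(\<psi> \<longlongrightarrow> cnj c) (at 0)"
        "m' = value_mult \<phi> c" "n' = value_mult \<psi> (cnj c)"
    unfolding singular_end_mults_def by blast
  then have "end_expansion (xz \<phi> \<psi> h) m"
  proof cases
    case pole_end
    with m' show ?thesis
      using end_expansion_at_pole_end[OF r ind(2) hol pole_end(1,2) _ _ L flux] by simp
  next
    case value_end
    with m' show ?thesis
      using end_expansion_at_value_end[OF r ind(2) hol value_end(1,2) _ _ L flux] by simp
  qed
  then show ?thesis
    unfolding end_expansion_def .
qed

end
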